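(* There is an absolute constant $C>0$ such that the following holds for every $n\ge 2$, every connected $n$-node graph $G_0$ and every node $u$. Let $T=\lceil Cn\ln n\rceil$ and run the triangulation process from $G_0$. Then the probability of the event that (for every $t<T$, more than $\delta_0/4$ nodes of $N^1_t(u)$ are strongly tied to $N^2_t(u)$ at round $t$) and $d_T(u)<\tfrac54\delta_0$ is at most $1/n^2$.
   Context: Triangulation process: $G_0$ is a connected simple undirected graph on an $n$-node vertex set $V$. Given $G_t$, in round $t$ every node $x$ independently picks two neighbors $v,w$ of $x$ in $G_t$, independently and uniformly at random, and the edge $\{v,w\}$ is added (nothing happens if $v=w$ or the edge already exists); $G_{t+1}$ is $G_t$ together with all edges added in round $t$. Edges are never removed. Notation: $d_t(x)$ is the degree of $x$ in $G_t$; $\delta_t$ is the minimum degree of $G_t$; $N^i_t(x)$ is the set of nodes at distance exactly $i$ from $x$ in $G_t$; for a set $S$, $d_t(x,S)$ is the number of neighbors of $x$ in $G_t$ lying in $S$. A node $x$ is strongly tied to a set $S$ at round $t$ if $d_t(x,S)\ge \delta_0/2$, and weakly tied to $S$ at round $t$ if $d_t(x,S)<\delta_0/2$. *)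

theory Defs
  imports "HOL-Probability.Probability"
begin

definition simple_graph :: "nat set \<Rightarrow> nat set set \<Rightarrow> bool" where
  "simple_graph V E \<longleftrightarrow> finite V \<and> (\<forall>e\<in>E. \<exists>a b. e = {a, b} \<and> a \<in> V \<and> b \<in> V \<and> a \<noteq> b)"

definition adj :: "nat set set \<Rightarrow> nat \<Rightarrow> nat \<Rightarrow> bool" where
  "adj E x y \<longleftrightarrow> {x, y} \<in> E \<and> x \<noteq> y"

definition connected_graph :: "nat set \<Rightarrow> nat set set \<Rightarrow> bool" where
  "connected_graph V E \<longleftrightarrow> (\<forall>x\<in>V. \<forall>y\<in>V. (adj E)\<^sup>*\<^sup>* x y)"

definition nbrs :: "nat set set \<Rightarrow> nat \<Rightarrow> nat set" where
  "nbrs E x = {y. adj E x y}"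

definition deg :: "nat set set \<Rightarrow> nat \<Rightarrow> nat" where
  "deg E x = card (nbrs E x)"

definition min_deg :: "nat set \<Rightarrow> nat set set \<Rightarrow> nat" where
  "min_deg V E = Min (deg E ` V)"

text \<open>N^i(x): nodes at distance exactly i from x (shortest walk has length i).\<close>
definition Nset :: "nat set set \<Rightarrow> nat \<Rightarrow> nat \<Rightarrow> nat set" where
  "Nset E x i = {y. (adj E ^^ i) x y \<and> (\<forall>j<i. \<not> (adj E ^^ j) x y)}"

definition deg_in :: "nat set set \<Rightarrow> nat \<Rightarrow> nat set \<Rightarrow> nat" where
  "deg_in E x S = card (nbrs E x \<inter> S)"

text \<open>One round: each node x in V independently picks an ordered pair (v,w) of
  neighbours, independently and uniformly (i.e. uniform on N(x) x N(x));
  the edge {v,w} is added if v \<noteq> w.  (Isolated nodes pick (x,x), adding nothing.)\<close>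
definition choice_pmf :: "nat set set \<Rightarrow> nat \<Rightarrow> (nat \<times> nat) pmf" where
  "choice_pmf E x = (if nbrs E x = {} then return_pmf (x, x)
                     else pmf_of_set (nbrs E x \<times> nbrs E x))"

definition tri_step :: "nat set \<Rightarrow> nat set set \<Rightarrow> nat set set pmf" where
  "tri_step V E = map_pmf
     (\<lambda>c. E \<union> {{fst (c x), snd (c x)} | x. x \<in> V \<and> fst (c x) \<noteq> snd (c x)})
     (Pi_pmf V undefined (choice_pmf E))"

text \<open>Distribution of the trajectory [G_0, ..., G_t] (a list of length t+1).\<close>
fun tri_traj :: "nat set \<Rightarrow> nat set set \<Rightarrow> nat \<Rightarrow> nat set set list pmf" where
  "tri_traj V E0 0 = return_pmf [E0]"
| "tri_traj V E0 (Suc t) =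
     bind_pmf (tri_traj V E0 t) (\<lambda>gs. map_pmf (\<lambda>H. gs @ [H]) (tri_step V (last gs)))"

end

theory Submission imports Defs begin

(* Proof idea: a stopped supermartingale and Markov's inequality.
   Fix u and a real parameter \<delta> with 0 < \<delta> \<le> n (later \<delta> = \<delta>0).  Call a graph strong if more
   than \<delta>/4 neighbours of u are strongly tied to N^2(u).  If G_t is strong and d_t(u) < 5\<delta>/4,
   then each strongly tied neighbour x of u picks a pair (u,w) or (w,u) with w \<in> N^2_t(u) with
   probability at least 1/(4n), and such a pick gives u a new neighbour.  The picks are
   independent, so d(u) grows with probability at least \<delta>/(32n) and
   E[2^-d_{t+1}(u)] \<le> 2^-d_t(u) (1 - \<delta>/(64n)).  Consequently the weight
   F_t = 2^-d_t(u) / (1 - \<delta>/(64n))^t, set to 0 once the event of the theorem fails, has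
   expectation at most 2^-d_0(u) \<le> 2^-\<delta>.  On the event, F_T \<ge> 2^(-5\<delta>/4) / (1 - \<delta>/(64n))^T, so
   the event has probability at most 2^(\<delta>/4) (1 - \<delta>/(64n))^T \<le> n^-2 once T \<ge> 192 n ln n. *)

lemma adj_sym: "adj E x y \<longleftrightarrow> adj E y x"
  by (auto simp: adj_def insert_commute)

lemma nbrs_subset: "simple_graph V E \<Longrightarrow> nbrs E x \<subseteq> V"
  unfolding simple_graph_def nbrs_def adj_def by fastforce

lemma finite_nbrs: "simple_graph V E \<Longrightarrow> finite (nbrs E x)"
  using nbrs_subset simple_graph_def finite_subset by metis

lemma deg_le_card: "simple_graph V E \<Longrightarrow> deg E x \<le> card V"
  unfolding deg_def by (intro card_mono nbrs_subset) (auto simp: simple_graph_def)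

lemma Nset_1: "Nset E u 1 = nbrs E u"
  by (auto simp: Nset_def nbrs_def adj_def)

lemma Nset_2_iff: "w \<in> Nset E u 2 \<longleftrightarrow> (\<exists>z. adj E u z \<and> adj E z w) \<and> w \<noteq> u \<and> \<not> adj E u w"
proof -
  have "(adj E ^^ 2) u w \<longleftrightarrow> (\<exists>z. adj E u z \<and> adj E z w)"
    by (auto simp: numeral_2_eq_2 relcompp_apply)
  moreover have "(\<forall>j<2. \<not> (adj E ^^ j) u w) \<longleftrightarrow> u \<noteq> w \<and> \<not> adj E u w"
    by (auto simp: numeral_2_eq_2 less_Suc_eq)
  ultimately show ?thesis unfolding Nset_def by auto
qed

lemma nbrs_mono: "G \<subseteq> H \<Longrightarrow> nbrs G x \<subseteq> nbrs H x"
  by (auto simp: nbrs_def adj_def)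

lemma deg_mono: "G \<subseteq> H \<Longrightarrow> simple_graph V H \<Longrightarrow> deg G x \<le> deg H x"
  unfolding deg_def by (intro card_mono finite_nbrs nbrs_mono)

text \<open>Every neighbour of a neighbour x of u is u itself, another neighbour of u, or lies in
  N^2(u); hence d(x) \<le> d(u) + d(x, N^2(u)).\<close>
lemma deg_nbr_le:
  assumes G: "simple_graph V G" and x: "x \<in> nbrs G u"
  shows "deg G x \<le> deg G u + deg_in G x (Nset G u 2)"
proof -
  define W where "W = nbrs G x \<inter> Nset G u 2"
  have fin: "finite (nbrs G u)" "finite W" using finite_nbrs[OF G] by (auto simp: W_def)
  have "nbrs G x \<subseteq> insert u ((nbrs G u - {x}) \<union> W)"
  proof
    fix y assume y: "y \<in> nbrs G x"
    then have "y \<noteq> x" "adj G x y" by (auto simp: nbrs_def adj_def)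
    moreover have "adj G u x" using x by (simp add: nbrs_def)
    ultimately show "y \<in> insert u ((nbrs G u - {x}) \<union> W)"
      using y Nset_2_iff[of y G u] by (auto simp: W_def nbrs_def)
  qed
  then have "deg G x \<le> card (insert u ((nbrs G u - {x}) \<union> W))"
    unfolding deg_def using fin by (intro card_mono) auto
  also have "\<dots> \<le> Suc (card ((nbrs G u - {x}) \<union> W))"
    using fin by (simp add: card_insert_if)
  also have "\<dots> \<le> Suc (card (nbrs G u - {x}) + card W)"
    using card_Un_le by simp
  also have "\<dots> = deg G u + card W"
  proof -
    have "card (nbrs G u) > 0" using x fin(1) card_gt_0_iff by blast
    then show ?thesis using x fin by (simp add: deg_def)
  qed
  finally show ?thesis by (simp add: deg_in_def W_def)
qed

lemma min_deg_ge_1: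
  assumes G: "simple_graph V E" and con: "connected_graph V E" and V2: "card V \<ge> 2"
  shows "1 \<le> min_deg V E"
proof -
  have V: "finite V" "V \<noteq> {}" using G V2 by (auto simp: simple_graph_def)
  have "1 \<le> deg E x" if x: "x \<in> V" for x
  proof -
    have "\<not> V \<subseteq> {x}"
    proof
      assume "V \<subseteq> {x}"
      then have "card V \<le> 1" using card_mono[of "{x}" V] by simp
      then show False using V2 by simp
    qed
    then obtain y where y: "y \<in> V" "y \<noteq> x" by auto
    then have "(adj E)\<^sup>*\<^sup>* x y" using con x by (simp add: connected_graph_def)
    then obtain z where "adj E x z" using y(2) by (metis converse_rtranclpE)
    then have "nbrs E x \<noteq> {}" by (auto simp: nbrs_def)
    then show ?thesis using finite_nbrs[OF G] by (simp add: deg_def Suc_le_eq card_gt_0_iff)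
  qed
  then show ?thesis using V by (simp add: min_deg_def)
qed

lemma min_deg_le: "finite V \<Longrightarrow> u \<in> V \<Longrightarrow> min_deg V E \<le> deg E u"
  by (simp add: min_deg_def)

section \<open>Support of the process\<close>

definition add_picks :: "nat set \<Rightarrow> nat set set \<Rightarrow> (nat \<Rightarrow> nat \<times> nat) \<Rightarrow> nat set set" where
  "add_picks V G c = G \<union> {{fst (c x), snd (c x)} | x. x \<in> V \<and> fst (c x) \<noteq> snd (c x)}"

lemma tri_step_add_picks: "tri_step V G = map_pmf (add_picks V G) (Pi_pmf V undefined (choice_pmf G))"
  unfolding tri_step_def add_picks_def ..

lemma set_choice_pmf:
  "simple_graph V G \<Longrightarrow> c \<in> set_pmf (choice_pmf G x) \<Longrightarrow> c \<in> nbrs G x \<times> nbrs G x \<or> c = (x, x)"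
  using finite_nbrs[of V G x] by (auto simp: choice_pmf_def split: if_splits)

lemma set_Pi_choice:
  "finite V \<Longrightarrow> c \<in> set_pmf (Pi_pmf V undefined (choice_pmf G)) \<Longrightarrow> x \<in> V \<Longrightarrow> c x \<in> set_pmf (choice_pmf G x)"
  using set_Pi_pmf_subset'[of V undefined "choice_pmf G"] by (auto simp: PiE_dflt_def)

lemma step_support:
  assumes V: "finite V" and G: "simple_graph V G" and H: "H \<in> set_pmf (tri_step V G)"
  shows "G \<subseteq> H" and "simple_graph V H"
proof -
  obtain c where c: "c \<in> set_pmf (Pi_pmf V undefined (choice_pmf G))" and Hc: "H = add_picks V G c"
    using H by (auto simp: tri_step_add_picks)
  show "G \<subseteq> H" by (simp add: Hc add_picks_def)
  have "\<exists>a b. e = {a, b} \<and> a \<in> V \<and> b \<in> V \<and> a \<noteq> b" if e: "e \<in> H" for e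
  proof (cases "e \<in> G")
    case True then show ?thesis using G by (auto simp: simple_graph_def)
  next
    case False
    then obtain x where x: "x \<in> V" "fst (c x) \<noteq> snd (c x)" "e = {fst (c x), snd (c x)}"
      using e by (auto simp: Hc add_picks_def)
    then have "c x \<in> nbrs G x \<times> nbrs G x"
      using set_choice_pmf[OF G set_Pi_choice[OF V c x(1)]] by auto
    then show ?thesis using nbrs_subset[OF G, of x] x by (cases "c x") auto
  qed
  then show "simple_graph V H" using V by (simp add: simple_graph_def)
qed

lemma traj_support:
  assumes V: "finite V" and G: "simple_graph V E0"
  shows "gs \<in> set_pmf (tri_traj V E0 t) \<Longrightarrow> length gs = Suc t \<and> simple_graph V (last gs)"
proof (induction t arbitrary: gs)
  case 0 then show ?case using G by auto
next
  case (Suc t)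
  then obtain hs H where "hs \<in> set_pmf (tri_traj V E0 t)" "H \<in> set_pmf (tri_step V (last hs))"
    and "gs = hs @ [H]"
    by auto
  then show ?case using Suc.IH step_support(2)[OF V] by auto
qed


section \<open>One round: the degree of u grows with probability \<Omega>(\<delta>/n)\<close>

text \<open>The picks of a node x that give u a new neighbour: u together with a neighbour of x
  lying in N^2(u), in either order.\<close>
definition new_nbr_picks :: "nat set set \<Rightarrow> nat \<Rightarrow> nat \<Rightarrow> (nat \<times> nat) set" where
  "new_nbr_picks G u x = {u} \<times> (nbrs G x \<inter> Nset G u 2) \<union> (nbrs G x \<inter> Nset G u 2) \<times> {u}"

definition tied_nbrs :: "real \<Rightarrow> nat set set \<Rightarrow> nat \<Rightarrow> nat set" where
  "tied_nbrs \<delta> G u = {x \<in> Nset G u 1. real (deg_in G x (Nset G u 2)) \<ge> \<delta> / 2}"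

definition strong :: "real \<Rightarrow> nat \<Rightarrow> nat set set \<Rightarrow> bool" where
  "strong \<delta> u G \<longleftrightarrow> real (card (tied_nbrs \<delta> G u)) > \<delta> / 4"

text \<open>A neighbour x strongly tied to N^2(u) makes such a pick with probability at least
  1/(4n) while d(u) < 5\<delta>/4: x has at most d(u) + d(x,N^2(u)) \<le> 7/2 d(x,N^2(u)) and at most
  n neighbours, and 2 d(x,N^2(u)) of the d(x)^2 pairs are good.\<close>
lemma new_nbr_pick_prob:
  assumes G: "simple_graph V G" and \<delta>: "0 < \<delta>" "\<delta> \<le> real (card V)"
    and du: "real (deg G u) < 5/4 * \<delta>"
    and x: "x \<in> tied_nbrs \<delta> G u"
  shows "1 / (4 * real (card V)) \<le> measure_pmf.prob (choice_pmf G x) (new_nbr_picks G u x)"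
proof -
  define N where "N = nbrs G x"
  define W where "W = nbrs G x \<inter> Nset G u 2"
  define w where "w = real (card W)"
  define m where "m = real (card N)"
  define n where "n = real (card V)"
  have xu: "x \<in> nbrs G u" and w_ge: "\<delta> / 2 \<le> w"
    using x unfolding tied_nbrs_def Nset_1 by (auto simp: deg_in_def w_def W_def)
  have fin: "finite N" "finite W" using finite_nbrs[OF G] by (auto simp: N_def W_def)
  have uN: "u \<in> N" using xu adj_sym by (auto simp: N_def nbrs_def)
  have uW: "u \<notin> W" by (auto simp: W_def Nset_2_iff)
  have picks_sub: "new_nbr_picks G u x \<subseteq> N \<times> N" using uN by (auto simp: new_nbr_picks_def N_def)
  have card_picks: "card (new_nbr_picks G u x) = 2 * card W"
    unfolding new_nbr_picks_def W_def[symmetric] using fin uW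
    by (subst card_Un_disjoint) (auto simp: card_cartesian_product)
  have "measure_pmf.prob (choice_pmf G x) (new_nbr_picks G u x) = 2 * w / (m * m)"
  proof -
    have "choice_pmf G x = pmf_of_set (N \<times> N)" using uN by (auto simp: choice_pmf_def N_def)
    moreover have "N \<times> N \<inter> new_nbr_picks G u x = new_nbr_picks G u x" using picks_sub by blast
    moreover have "N \<times> N \<noteq> {}" "finite (N \<times> N)" using uN fin by auto
    ultimately show ?thesis using card_picks measure_pmf_of_set[of "N \<times> N" "new_nbr_picks G u x"]
      by (simp add: card_cartesian_product w_def m_def)
  qed
  moreover have "1 / (4 * n) \<le> 2 * w / (m * m)"
  proof -
    have "m \<le> real (deg G u) + w"
      using deg_nbr_le[OF G xu] by (simp add: m_def N_def w_def W_def deg_def deg_in_def)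
    then have m_w: "m \<le> 7/2 * w" using du w_ge by linarith
    have m_n: "m \<le> n" using deg_le_card[OF G, of x] by (simp add: m_def n_def N_def deg_def)
    have m_pos: "0 < m" using uN fin by (auto simp: m_def card_gt_0_iff)
    have "m * m \<le> (7/2 * w) * n" using m_w m_n m_pos by (intro mult_mono) auto
    moreover have "0 \<le> n * w" by (simp add: n_def w_def)
    ultimately have "m * m \<le> 8 * n * w" by (simp add: algebra_simps)
    then show ?thesis using m_pos \<delta> by (simp add: n_def field_simps)
  qed
  ultimately show ?thesis by (simp add: n_def)
qed

lemma new_nbr_pick_increases_deg:
  assumes V: "finite V" and G: "simple_graph V G"
    and c: "c \<in> set_pmf (Pi_pmf V undefined (choice_pmf G))"
    and x: "x \<in> V" and cx: "c x \<in> new_nbr_picks G u x"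
  shows "deg G u < deg (add_picks V G c) u"
proof -
  have H: "add_picks V G c \<in> set_pmf (tri_step V G)" using c by (simp add: tri_step_add_picks)
  obtain w where w: "w \<in> Nset G u 2" "c x = (u, w) \<or> c x = (w, u)"
    using cx by (auto simp: new_nbr_picks_def)
  have w_new: "w \<noteq> u" "\<not> adj G u w" using w(1) by (auto simp: Nset_2_iff)
  then have "{fst (c x), snd (c x)} \<in> add_picks V G c"
    using w(2) x unfolding add_picks_def by fastforce
  then have "{u, w} \<in> add_picks V G c" using w(2) by (auto simp: insert_commute)
  then have "w \<in> nbrs (add_picks V G c) u - nbrs G u" using w_new by (simp add: nbrs_def adj_def)
  then have "nbrs G u \<subset> nbrs (add_picks V G c) u" using nbrs_mono[OF step_support(1)[OF V G H]] by auto
  then show ?thesis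
    unfolding deg_def by (rule psubset_card_mono[OF finite_nbrs[OF step_support(2)[OF V G H]]])
qed

lemma Pi_pmf_some_hit:
  assumes V: "finite V" and S: "S \<subseteq> V" and q: "\<And>x. x \<in> S \<Longrightarrow> q \<le> measure_pmf.prob (p x) (A x)"
  shows "1 - exp (- (q * real (card S))) \<le> measure_pmf.prob (Pi_pmf V d p) {c. \<exists>x\<in>S. c x \<in> A x}"
proof -
  define B where "B = (\<lambda>x. if x \<in> S then - A x else UNIV)"
  have miss: "- {c. \<exists>x\<in>S. c x \<in> A x} = Pi V B" using S by (auto simp: B_def Pi_def)
  have "measure_pmf.prob (Pi_pmf V d p) (Pi V B) = (\<Prod>x\<in>V. measure_pmf.prob (p x) (B x))"
    by (rule measure_Pi_pmf_Pi[OF V])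
  also have "\<dots> \<le> (\<Prod>x\<in>V. if x \<in> S then exp (- q) else 1)"
  proof (rule prod_mono)
    fix x assume "x \<in> V"
    show "0 \<le> measure_pmf.prob (p x) (B x) \<and> measure_pmf.prob (p x) (B x) \<le> (if x \<in> S then exp (- q) else 1)"
    proof (cases "x \<in> S")
      case True
      have "measure_pmf.prob (p x) (B x) = 1 - measure_pmf.prob (p x) (A x)"
        using True measure_pmf.prob_compl[of "A x" "p x"] by (simp add: B_def Compl_eq_Diff_UNIV)
      also have "\<dots> \<le> 1 - q" using q[OF True] by simp
      also have "\<dots> \<le> exp (- q)" using exp_ge_add_one_self[of "- q"] by simp
      finally show ?thesis using True by simp
    qed (simp add: B_def)
  qed
  also have "\<dots> = exp (- q) ^ card S"
    using S V by (simp add: prod.If_cases Int_absorb1)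
  also have "\<dots> = exp (- (q * real (card S)))" by (simp add: exp_of_nat_mult[symmetric] mult.commute)
  finally have "measure_pmf.prob (Pi_pmf V d p) (Pi V B) \<le> exp (- (q * real (card S)))" .
  then show ?thesis
    using measure_pmf.prob_compl[of "{c. \<exists>x\<in>S. c x \<in> A x}" "Pi_pmf V d p"] miss
    by (simp add: Compl_eq_Diff_UNIV)
qed

text \<open>A lower bound 1 - exp(-s) \<ge> s/2 on [0,1], to turn 1 - exp(-q|S|) into a linear bound.\<close>
lemma exp_neg_le_one_minus_half:
  fixes s :: real
  assumes "0 \<le> s" "s \<le> 1"
  shows "exp (- s) \<le> 1 - s / 2"
proof -
  have "exp (- s) \<le> 1 / (1 + s)" using exp_ge_add_one_self[of s] assms by (simp add: exp_minus field_simps)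
  also have "\<dots> \<le> 1 - s / 2"
  proof -
    have "s * s \<le> s" using assms by (simp add: mult_left_le_one_le)
    then show ?thesis using assms by (simp add: field_simps)
  qed
  finally show ?thesis .
qed

text \<open>In a strong round with d(u) < 5\<delta>/4 the degree of u grows with probability \<ge> \<delta>/(32n):
  more than \<delta>/4 independent nodes each succeed with probability \<ge> 1/(4n).\<close>
lemma deg_increase_prob:
  assumes V: "finite V" and G: "simple_graph V G" and \<delta>: "0 < \<delta>" "\<delta> \<le> real (card V)"
    and du: "real (deg G u) < 5/4 * \<delta>" and st: "strong \<delta> u G"
  shows "\<delta> / (32 * real (card V)) \<le> measure_pmf.prob (tri_step V G) {H. deg G u < deg H u}"
proof -
  define n where "n = real (card V)"
  define S where "S = tied_nbrs \<delta> G u"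
  define P where "P = Pi_pmf V undefined (choice_pmf G)"
  have n_pos: "0 < n" using \<delta> by (simp add: n_def)
  have SV: "S \<subseteq> V" using nbrs_subset[OF G] unfolding S_def tied_nbrs_def Nset_1 by auto
  have "1 - exp (- (1 / (4 * n) * real (card S)))
          \<le> measure_pmf.prob P {c. \<exists>x\<in>S. c x \<in> new_nbr_picks G u x}"
    unfolding P_def n_def using new_nbr_pick_prob[OF G \<delta> du]
    by (intro Pi_pmf_some_hit[OF V SV]) (simp add: S_def)
  also have "\<dots> \<le> measure_pmf.prob P (add_picks V G -` {H. deg G u < deg H u})"
    using new_nbr_pick_increases_deg[OF V G] SV
    by (intro measure_pmf.finite_measure_mono_AE) (auto simp: AE_measure_pmf_iff P_def)
  also have "\<dots> = measure_pmf.prob (tri_step V G) {H. deg G u < deg H u}"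
    by (simp add: tri_step_add_picks P_def)
  finally have hit: "1 - exp (- (1 / (4 * n) * real (card S))) \<le> \<dots>" .
  have "\<delta> / (16 * n) \<le> 1 / (4 * n) * real (card S)"
    using st n_pos by (simp add: strong_def S_def field_simps)
  then have "exp (- (1 / (4 * n) * real (card S))) \<le> exp (- (\<delta> / (16 * n)))" by simp
  also have "\<dots> \<le> 1 - \<delta> / (32 * n)"
    using exp_neg_le_one_minus_half[of "\<delta> / (16 * n)"] \<delta> n_pos by (simp add: n_def field_simps)
  finally show ?thesis using hit by (simp add: n_def)
qed

section \<open>The supermartingale\<close>

lemma nn_integral_half_pow_le:
  fixes M :: "'a pmf" and f :: "'a \<Rightarrow> nat" and c :: real
  assumes c: "0 \<le> c" and ge: "\<And>a. a \<in> set_pmf M \<Longrightarrow> d \<le> f a"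
    and p: "p \<le> measure_pmf.prob M {a. d < f a}"
  shows "(\<integral>\<^sup>+a. ennreal (c * (1/2) ^ f a) \<partial>M) \<le> ennreal (c * (1/2) ^ d * (1 - p / 2))"
proof -
  define I where "I = {a. d < f a}"
  define g where "g = (\<lambda>a. c * (1/2) ^ d * (1 - indicator I a / 2 :: real))"
  have pointwise: "c * (1/2) ^ f a \<le> g a" if "a \<in> set_pmf M" for a
  proof (cases "a \<in> I")
    case True
    then have "(1/2::real) ^ f a \<le> (1/2) ^ Suc d" by (intro power_decreasing) (auto simp: I_def)
    then have "c * (1/2) ^ f a \<le> c * (1/2) ^ Suc d" using c by (rule mult_left_mono)
    then show ?thesis using True by (simp add: g_def)
  next
    case False
    then show ?thesis using ge[OF that] c by (simp add: g_def mult_left_mono power_decreasing)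
  qed
  have g_nonneg: "0 \<le> g a" for a using c by (simp add: g_def indicator_def)
  have g_le: "g a \<le> c" for a
  proof -
    have "(1/2::real) ^ d * (1 - indicator I a / 2) \<le> 1"
      by (intro mult_le_one) (auto simp: indicator_def power_le_one)
    then show ?thesis using c unfolding g_def mult.assoc by (rule mult_left_le)
  qed
  have g_int: "integrable M g"
    using g_nonneg g_le by (intro measure_pmf.integrable_const_bound[where B = c]) auto
  have "(\<integral>\<^sup>+a. ennreal (c * (1/2) ^ f a) \<partial>M) \<le> (\<integral>\<^sup>+a. ennreal (g a) \<partial>M)"
    using pointwise by (intro nn_integral_mono_AE) (auto simp: AE_measure_pmf_iff ennreal_leI)
  also have "\<dots> = ennreal (\<integral>a. g a \<partial>M)"
    using g_int g_nonneg by (intro nn_integral_eq_integral) auto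
  also have "(\<integral>a. g a \<partial>M) = c * (1/2) ^ d * (1 - measure_pmf.prob M I / 2)"
  proof -
    have "integrable M (\<lambda>a. indicator I a / 2 :: real)"
      by (intro measure_pmf.integrable_const_bound[where B = 1]) (auto simp: indicator_def)
    then have "(\<integral>a. 1 - indicator I a / 2 \<partial>M) = 1 - measure_pmf.prob M I / 2"
      by (simp add: Bochner_Integration.integral_diff)
    then show ?thesis by (simp add: g_def)
  qed
  also have "\<dots> \<le> c * (1/2) ^ d * (1 - p / 2)"
    using p c by (intro mult_left_mono) (auto simp: I_def)
  finally show ?thesis by (simp add: ennreal_leI)
qed

definition good :: "real \<Rightarrow> nat \<Rightarrow> nat \<Rightarrow> nat set set list \<Rightarrow> bool" where
  "good \<delta> u t gs \<longleftrightarrow> (\<forall>s<t. strong \<delta> u (gs ! s)) \<and> real (deg (gs ! t) u) < 5/4 * \<delta>"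

definition weight :: "real \<Rightarrow> real \<Rightarrow> nat \<Rightarrow> nat \<Rightarrow> nat set set list \<Rightarrow> real" where
  "weight \<delta> r u t gs = (if good \<delta> u t gs then (1/2) ^ deg (gs ! t) u / r ^ t else 0)"

lemma last_eq_nth: "length gs = Suc t \<Longrightarrow> last gs = gs ! t"
  by (cases gs rule: rev_cases) auto

lemma rate_pos: "0 < \<delta> \<Longrightarrow> \<delta> \<le> n \<Longrightarrow> 0 < 1 - \<delta> / (64 * n)"
  for \<delta> n :: real
  by (simp add: field_simps)

text \<open>Since degrees never decrease, the event can only hold at round t+1 if it held at round t
  and round t was strong.\<close>
lemma good_snoc:
  assumes len: "length gs = Suc t" and g: "good \<delta> u (Suc t) (gs @ [H])"
    and mono: "deg (last gs) u \<le> deg H u"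
  shows "good \<delta> u t gs" and "strong \<delta> u (last gs)"
proof -
  have nth: "(gs @ [H]) ! s = gs ! s" if "s \<le> t" for s using that len by (simp add: nth_append)
  have last: "gs ! t = last gs" using last_eq_nth[OF len] by simp
  have "real (deg H u) < 5/4 * \<delta>" using g len by (simp add: good_def nth_append)
  then show "good \<delta> u t gs" using g mono nth last by (auto simp: good_def)
  have "strong \<delta> u ((gs @ [H]) ! t)" using g unfolding good_def by blast
  then show "strong \<delta> u (last gs)" using nth[of t] last by simp
qed

lemma weight_step:
  assumes V: "finite V" and G: "simple_graph V G" and \<delta>: "0 < \<delta>" "\<delta> \<le> real (card V)"
    and r: "r = 1 - \<delta> / (64 * real (card V))"
    and len: "length gs = Suc t" and last: "last gs = G"
  shows "(\<integral>\<^sup>+H. ennreal (weight \<delta> r u (Suc t) (gs @ [H])) \<partial>tri_step V G) \<le> ennreal (weight \<delta> r u t gs)"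
proof -
  have r_pos: "0 < r" using rate_pos[OF \<delta>] r by simp
  have deg_step: "deg G u \<le> deg H u" if "H \<in> set_pmf (tri_step V G)" for H
    using step_support[OF V G that] deg_mono by blast
  have nth_new: "(gs @ [H]) ! Suc t = H" for H using len by (simp add: nth_append)
  show ?thesis
  proof (cases "good \<delta> u t gs \<and> strong \<delta> u G")
    case True
    then have du: "real (deg G u) < 5/4 * \<delta>"
      using last_eq_nth[OF len] last by (simp add: good_def)
    have "(\<integral>\<^sup>+H. ennreal (weight \<delta> r u (Suc t) (gs @ [H])) \<partial>tri_step V G)
          \<le> (\<integral>\<^sup>+H. ennreal (1 / r ^ Suc t * (1/2) ^ deg H u) \<partial>tri_step V G)"
      using r_pos by (intro nn_integral_mono) (simp add: weight_def nth_new)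
    also have "\<dots> \<le> ennreal (1 / r ^ Suc t * (1/2) ^ deg G u * (1 - \<delta> / (32 * real (card V)) / 2))"
      using r_pos deg_step deg_increase_prob[OF V G \<delta> du] True
      by (intro nn_integral_half_pow_le) auto
    also have "\<dots> = ennreal (1 / r ^ Suc t * (1/2) ^ deg G u * r)" using r by simp
    also have "\<dots> = ennreal (weight \<delta> r u t gs)"
      using True last_eq_nth[OF len] last r_pos by (simp add: weight_def field_simps)
    finally show ?thesis .
  next
    case False
    have "weight \<delta> r u (Suc t) (gs @ [H]) = 0" if "H \<in> set_pmf (tri_step V G)" for H
      using good_snoc[OF len _ deg_step[OF that, folded last]] False last by (auto simp: weight_def)
    then have "(\<integral>\<^sup>+H. ennreal (weight \<delta> r u (Suc t) (gs @ [H])) \<partial>tri_step V G) = 0"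
      by (simp add: nn_integral_0_iff_AE AE_measure_pmf_iff)
    then show ?thesis by simp
  qed
qed

lemma weight_expectation:
  assumes V: "finite V" and G0: "simple_graph V E0" and \<delta>: "0 < \<delta>" "\<delta> \<le> real (card V)"
    and r: "r = 1 - \<delta> / (64 * real (card V))"
  shows "(\<integral>\<^sup>+gs. ennreal (weight \<delta> r u t gs) \<partial>tri_traj V E0 t) \<le> ennreal ((1/2) ^ deg E0 u)"
proof (induction t)
  case 0
  show ?case by (simp add: weight_def)
next
  case (Suc t)
  have "(\<integral>\<^sup>+gs. ennreal (weight \<delta> r u (Suc t) gs) \<partial>tri_traj V E0 (Suc t))
      = (\<integral>\<^sup>+gs. (\<integral>\<^sup>+H. ennreal (weight \<delta> r u (Suc t) (gs @ [H])) \<partial>tri_step V (last gs)) \<partial>tri_traj V E0 t)"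
    by (simp add: nn_integral_map_pmf)
  also have "\<dots> \<le> (\<integral>\<^sup>+gs. ennreal (weight \<delta> r u t gs) \<partial>tri_traj V E0 t)"
    using weight_step[OF V _ \<delta> r] traj_support[OF V G0]
    by (intro nn_integral_mono_AE) (auto simp: AE_measure_pmf_iff)
  finally show ?case using Suc.IH by simp
qed

section \<open>Markov's inequality and the final estimate\<close>

lemma prob_le_nn_integral_div:
  fixes M :: "'a pmf"
  assumes c: "0 < c" and on_A: "\<And>a. a \<in> A \<Longrightarrow> c \<le> F a"
    and B: "0 \<le> B" "(\<integral>\<^sup>+a. ennreal (F a) \<partial>M) \<le> ennreal B"
  shows "measure_pmf.prob M A \<le> B / c"
proof -
  have "ennreal (c * measure_pmf.prob M A) = (\<integral>\<^sup>+a. ennreal c * indicator A a \<partial>M)"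
    using c by (simp add: nn_integral_cmult_indicator measure_pmf.emeasure_eq_measure ennreal_mult)
  also have "\<dots> \<le> (\<integral>\<^sup>+a. ennreal (F a) \<partial>M)"
    using on_A by (intro nn_integral_mono) (simp add: indicator_def ennreal_leI)
  also have "\<dots> \<le> ennreal B" by (rule B(2))
  finally have "c * measure_pmf.prob M A \<le> B" using B(1) by (simp add: ennreal_le_iff)
  then show ?thesis using c by (simp add: field_simps)
qed

lemma half_pow_eq_exp: "(1/2::real) ^ k = exp (- (real k * ln 2))"
  by (simp add: exp_minus exp_of_nat_mult power_one_over inverse_eq_divide)

text \<open>Markov's inequality for the weight: on the event it is at least 2^(-5\<delta>/4) / r^T, while
  its expectation is at most 2^-d_0(u) \<le> 2^-\<delta>.\<close>
lemma good_prob_le: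
  assumes V: "finite V" and G0: "simple_graph V E0" and \<delta>: "0 < \<delta>" "\<delta> \<le> real (card V)"
    and du: "\<delta> \<le> real (deg E0 u)"
  shows "measure_pmf.prob (tri_traj V E0 T) {gs. good \<delta> u T gs}
           \<le> exp (\<delta> * ln 2 / 4) * (1 - \<delta> / (64 * real (card V))) ^ T"
proof -
  define r where "r = 1 - \<delta> / (64 * real (card V))"
  have r_pos: "0 < r" using rate_pos[OF \<delta>] by (simp add: r_def)
  define c where "c = exp (- (5/4 * \<delta> * ln 2)) / r ^ T"
  have on_event: "c \<le> weight \<delta> r u T gs" if "gs \<in> {gs. good \<delta> u T gs}" for gs
  proof -
    have "exp (- (5/4 * \<delta> * ln 2)) \<le> (1/2) ^ deg (gs ! T) u"
      using that by (simp add: half_pow_eq_exp good_def)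
    then show ?thesis using that r_pos by (simp add: c_def weight_def divide_right_mono)
  qed
  have "measure_pmf.prob (tri_traj V E0 T) {gs. good \<delta> u T gs} \<le> (1/2) ^ deg E0 u / c"
    using r_pos
    by (intro prob_le_nn_integral_div[OF _ on_event _ weight_expectation[OF V G0 \<delta> r_def]])
       (auto simp: c_def)
  also have "\<dots> \<le> exp (- (\<delta> * ln 2)) / c"
    using du r_pos by (intro divide_right_mono) (auto simp: half_pow_eq_exp c_def)
  also have "\<dots> = exp (\<delta> * ln 2 / 4) * r ^ T"
    using r_pos by (simp add: c_def exp_minus field_simps flip: exp_add)
  finally show ?thesis by (simp add: r_def)
qed

text \<open>For T \<ge> 192 n ln n the bound of good_prob_le is at most 1/n^2: (1 - \<delta>/(64n))^T \<le> n^(-3\<delta>)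
  and 2^(\<delta>/4) \<le> n^(\<delta>/4).\<close>
lemma final_estimate:
  fixes n \<delta> :: real
  assumes n: "2 \<le> n" and \<delta>: "1 \<le> \<delta>" "\<delta> \<le> n" and T: "192 * n * ln n \<le> real T"
  shows "exp (\<delta> * ln 2 / 4) * (1 - \<delta> / (64 * n)) ^ T \<le> 1 / n ^ 2"
proof -
  have ln_n: "ln 2 \<le> ln n" "0 < (ln 2 :: real)" using n by auto
  have "(1 - \<delta> / (64 * n)) ^ T \<le> exp (- (\<delta> / (64 * n))) ^ T"
    using exp_ge_add_one_self[of "- (\<delta> / (64 * n))"] \<delta> n by (intro power_mono) (auto simp: field_simps)
  also have "\<dots> = exp (- (real T * (\<delta> / (64 * n))))" by (simp flip: exp_of_nat_mult)
  also have "\<dots> \<le> exp (- (3 * \<delta> * ln n))"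
  proof -
    have "192 * n * ln n * (\<delta> / (64 * n)) \<le> real T * (\<delta> / (64 * n))"
      using T \<delta> n by (intro mult_right_mono) auto
    then show ?thesis using n by (simp add: field_simps)
  qed
  finally have rT: "(1 - \<delta> / (64 * n)) ^ T \<le> exp (- (3 * \<delta> * ln n))" .
  have "exp (\<delta> * ln 2 / 4) * (1 - \<delta> / (64 * n)) ^ T \<le> exp (\<delta> * ln 2 / 4) * exp (- (3 * \<delta> * ln n))"
    using rT by (intro mult_left_mono) auto
  also have "\<dots> \<le> exp (- (2 * ln n))"
  proof -
    have "\<delta> * ln 2 \<le> \<delta> * ln n" "ln n \<le> \<delta> * ln n" "0 \<le> \<delta> * ln 2"
      using ln_n \<delta> mult_right_mono[OF \<delta>(1), of "ln n"] by (auto intro: mult_left_mono)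
    then show ?thesis by (simp flip: exp_add)
  qed
  also have "\<dots> = 1 / n ^ 2"
  proof -
    have "exp (2 * ln n) = exp (ln n) ^ 2" by (metis exp_of_nat_mult of_nat_numeral)
    then show ?thesis using n by (simp add: exp_minus divide_inverse)
  qed
  finally show ?thesis .
qed

text \<open>With C = 192 and \<delta> = \<delta>0: the event of the theorem is good \<delta>0 u T, and 1 \<le> \<delta>0 \<le> d_0(u) \<le> n.\<close>
theorem lemma5:
  "\<exists>C::real. C > 0 \<and>
     (\<forall>(V::nat set) (E0::nat set set) (u::nat).
        finite V \<and> card V \<ge> 2 \<and> simple_graph V E0 \<and> connected_graph V E0 \<and> u \<in> V \<longrightarrow>
        (let n = card V; \<delta>0 = real (min_deg V E0); T = nat \<lceil>C * real n * ln (real n)\<rceil> in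
          measure_pmf.prob (tri_traj V E0 T)
            {gs. (\<forall>t<T. real (card {x \<in> Nset (gs ! t) u 1.
                               real (deg_in (gs ! t) x (Nset (gs ! t) u 2)) \<ge> \<delta>0 / 2}) > \<delta>0 / 4)
                 \<and> real (deg (gs ! T) u) < 5 / 4 * \<delta>0}
          \<le> 1 / real n ^ 2))"
proof (rule exI[of _ 192], intro conjI allI impI)
  fix V :: "nat set" and E0 u
  assume "finite V \<and> card V \<ge> 2 \<and> simple_graph V E0 \<and> connected_graph V E0 \<and> u \<in> V"
  then have V: "finite V" and n2: "card V \<ge> 2" and G0: "simple_graph V E0"
    and con: "connected_graph V E0" and u: "u \<in> V" by auto
  define n where "n = real (card V)"
  define \<delta> where "\<delta> = real (min_deg V E0)"
  define T where "T = nat \<lceil>192 * n * ln n\<rceil>"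
  have \<delta>_ge: "1 \<le> \<delta>" using min_deg_ge_1[OF G0 con n2] by (simp add: \<delta>_def)
  have \<delta>_du: "\<delta> \<le> real (deg E0 u)" using min_deg_le[OF V u] by (simp add: \<delta>_def)
  have \<delta>_n: "\<delta> \<le> n" using \<delta>_du deg_le_card[OF G0, of u] by (simp add: n_def)
  have n_ge: "2 \<le> n" using n2 by (simp add: n_def)
  have T_ge: "192 * n * ln n \<le> real T" unfolding T_def by linarith
  have "measure_pmf.prob (tri_traj V E0 T) {gs. good \<delta> u T gs}
          \<le> exp (\<delta> * ln 2 / 4) * (1 - \<delta> / (64 * n)) ^ T"
    using good_prob_le[OF V G0 _ _ \<delta>_du] \<delta>_ge \<delta>_n by (simp add: n_def)
  also have "\<dots> \<le> 1 / n ^ 2" by (rule final_estimate[OF n_ge \<delta>_ge \<delta>_n T_ge])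
  finally show "let n = card V; \<delta>0 = real (min_deg V E0); T = nat \<lceil>192 * real n * ln (real n)\<rceil> in
          measure_pmf.prob (tri_traj V E0 T)
            {gs. (\<forall>t<T. real (card {x \<in> Nset (gs ! t) u 1.
                               real (deg_in (gs ! t) x (Nset (gs ! t) u 2)) \<ge> \<delta>0 / 2}) > \<delta>0 / 4)
                 \<and> real (deg (gs ! T) u) < 5 / 4 * \<delta>0}
          \<le> 1 / real n ^ 2"
    by (simp add: Let_def good_def strong_def tied_nbrs_def n_def \<delta>_def T_def)
qed simp

end
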